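(* Let $(Q,\cdot)$ be a quadratical quasigroup and $a,b\in Q$ distinct. Then for every positive integer $t$: $t1\cdot t4=t2$, $t2\cdot t3=t4$, $t3\cdot t2=t1$ and $t4\cdot t1=t3$.
   Context: A quadratical quasigroup is a quasigroup satisfying $xy\cdot x=zx\cdot yz$ (equivalently, a groupoid satisfying $x\cdot x=x$, $yx\cdot xy=x$, $xy\cdot zw=xz\cdot yw$). The elements $tk$ ($t\ge1$, $k\in\{1,2,3,4\}$) are defined by $11=a$, $12=ab$, $13=ba$, $14=b$ and, for $n\ge2$, $n1=(n-1)1\cdot(n-1)2$, $n2=(n-1)2\cdot(n-1)4$, $n3=(n-1)3\cdot(n-1)1$, $n4=(n-1)4\cdot(n-1)3$. *)

theory Defs
  imports Main
begin

definition quasigroup :: "('a \<Rightarrow> 'a \<Rightarrow> 'a) \<Rightarrow> bool" where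
  "quasigroup m \<longleftrightarrow> (\<forall>a b. (\<exists>!x. m a x = b) \<and> (\<exists>!y. m y a = b))"

definition quadratical :: "('a \<Rightarrow> 'a \<Rightarrow> 'a) \<Rightarrow> bool" where
  "quadratical m \<longleftrightarrow> quasigroup m \<and>
     (\<forall>x y z. m (m x y) x = m (m z x) (m y z))"

text \<open>qseq m a b n = (t1, t2, t3, t4) for t = n + 1.\<close>
fun qseq :: "('a \<Rightarrow> 'a \<Rightarrow> 'a) \<Rightarrow> 'a \<Rightarrow> 'a \<Rightarrow> nat \<Rightarrow> 'a \<times> 'a \<times> 'a \<times> 'a" where
  "qseq m a b 0 = (a, m a b, m b a, b)"
| "qseq m a b (Suc n) = (case qseq m a b n of (x1, x2, x3, x4) \<Rightarrow>
      (m x1 x2, m x2 x4, m x3 x1, m x4 x3))"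

definition qel :: "('a \<Rightarrow> 'a \<Rightarrow> 'a) \<Rightarrow> 'a \<Rightarrow> 'a \<Rightarrow> nat \<Rightarrow> nat \<Rightarrow> 'a" where
  "qel m a b t k = (case qseq m a b (t - 1) of (x1, x2, x3, x4) \<Rightarrow>
      (if k = 1 then x1 else if k = 2 then x2 else if k = 3 then x3 else x4))"

end

theory Submission
  imports Defs
begin

text \<open>The four relations hold for \<open>t = 1\<close> by the identity \<open>yx \<cdot> xy = x\<close>, and mediality
  \<open>xy \<cdot> zw = xz \<cdot> yw\<close> carries them from \<open>t\<close> to \<open>t + 1\<close>: for instance
  \<open>(t+1)1 \<cdot> (t+1)4 = (t1 \<cdot> t2)(t4 \<cdot> t3) = (t1 \<cdot> t4)(t2 \<cdot> t3) = t2 \<cdot> t4 = (t+1)2\<close>.\<close>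

lemma quadratical_identity:
  assumes "quadratical m"
  shows "m (m x y) x = m (m z x) (m y z)"
  using assms unfolding quadratical_def by blast

lemma quadratical_left_cancel:
  assumes "quadratical m" and "m a x = m a y"
  shows "x = y"
  using assms unfolding quadratical_def quasigroup_def by metis

lemma quadratical_idem:
  assumes "quadratical m"
  shows "m x x = x"
proof -
  have "m (m x x) x = m (m x x) (m x x)"
    using quadratical_identity[OF assms, of x x x] .
  then show ?thesis
    using quadratical_left_cancel[OF assms] by metis
qed

lemma quadratical_swap:
  assumes "quadratical m"
  shows "m (m y x) (m x y) = x"
  using quadratical_identity[OF assms, of x x y] quadratical_idem[OF assms] by simp

lemma quadratical_medial:
  assumes "quadratical m"
  shows "m (m x y) (m z w) = m (m x z) (m y w)"
proof -
  note identity = quadratical_identity[OF assms] and swap = quadratical_swap[OF assms]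
  show ?thesis by (smt (verit, best) identity swap)
qed

definition quad_relations :: "('a \<Rightarrow> 'a \<Rightarrow> 'a) \<Rightarrow> 'a \<times> 'a \<times> 'a \<times> 'a \<Rightarrow> bool" where
  "quad_relations m q \<longleftrightarrow> (case q of (x1, x2, x3, x4) \<Rightarrow>
     m x1 x4 = x2 \<and> m x2 x3 = x4 \<and> m x3 x2 = x1 \<and> m x4 x1 = x3)"

lemma quad_relations_qseq:
  assumes swap: "\<And>x y. m (m y x) (m x y) = x"
    and medial: "\<And>x y z w. m (m x y) (m z w) = m (m x z) (m y w)"
  shows "quad_relations m (qseq m a b n)"
proof (induction n)
  case 0
  show ?case using swap by (simp add: quad_relations_def)
next
  case (Suc n)
  obtain x1 x2 x3 x4 where q: "qseq m a b n = (x1, x2, x3, x4)"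
    by (cases "qseq m a b n") auto
  with Suc have "m x1 x4 = x2" "m x2 x3 = x4" "m x3 x2 = x1" "m x4 x1 = x3"
    by (simp_all add: quad_relations_def)
  with q show ?case
    using medial[of x1 x2 x4 x3] medial[of x2 x4 x3 x1]
      medial[of x3 x1 x2 x4] medial[of x4 x3 x1 x2]
    by (simp add: quad_relations_def)
qed

theorem proposition3p5:
  fixes m :: "'a \<Rightarrow> 'a \<Rightarrow> 'a" and a b :: 'a and t :: nat
  assumes "quadratical m" and "a \<noteq> b" and "t \<ge> 1"
  shows "m (qel m a b t 1) (qel m a b t 4) = qel m a b t 2
       \<and> m (qel m a b t 2) (qel m a b t 3) = qel m a b t 4
       \<and> m (qel m a b t 3) (qel m a b t 2) = qel m a b t 1
       \<and> m (qel m a b t 4) (qel m a b t 1) = qel m a b t 3"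
proof -
  have "quad_relations m (qseq m a b (t - 1))"
    using quadratical_swap[OF assms(1)] quadratical_medial[OF assms(1)]
    by (rule quad_relations_qseq)
  then show ?thesis
    unfolding qel_def quad_relations_def by (cases "qseq m a b (t - 1)") auto
qed

end
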